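(* Let $\mathbf{C}=\mathbf{C}_1\,\dot\cup\,\mathbf{C}_2$ (disjoint union), and let $\mathbf{B}\in\dot{\mathbb{P}}(\mathbb{L}(\mathbf{C}_1))$ with $|\mathbf{B}|=|\mathbf{C}_1|$. Then $\mathbf{B}$ is irreducible for $\mathcal{D}(\mathbf{C},\Omega)$ if and only if there exist $\omega^*\in\Omega$ and values $\mathbf{c}_2^*$ for $\mathbf{C}_2$ such that (i) $D_{\mathbf{B}=\mathbf{1},\mathbf{C}_2=\mathbf{c}_2^*}(\omega^* )=1$, and (ii) for every $L\in\mathbf{B}$, $D_{\mathbf{B}\setminus\{L\}=\mathbf{1},L=0,\mathbf{C}_2=\mathbf{c}_2^*}(\omega^* )=0$.
   Context: An event is a binary random variable on a population $\Omega$ of individuals $\omega$; $\overline{X}=1-X$. For a finite set $\mathbf{C}$ of events (causes), $\mathbb{L}(\mathbf{C})=\mathbf{C}\cup\{\overline{X}:X\in\mathbf{C}\}$, and $\dot{\mathbb{P}}(\mathbb{L}(\mathbf{C}))$ is the set of subsets of $\mathbb{L}(\mathbf{C})$ not containing both $X$ and $\overline{X}$ for any $X$. $(L)_{\mathbf{c}}$ is the value of literal $L$ under assignment $\mathbf{c}$, and $\bigwedge(\mathbf{B})=\min_{L\in\mathbf{B}}L$. The potential outcomes $\mathcal{D}(\mathbf{C},\Omega)$ are values $D_{\mathbf{c}}(\omega)\in\{0,1\}$ for every $\omega\in\Omega$ and every assignment $\mathbf{c}$ to $\mathbf{C}$. If $\mathbf{B}\in\dot{\mathbb{P}}(\mathbb{L}(\mathbf{C}_1))$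 has $|\mathbf{B}|=|\mathbf{C}_1|$ (exactly one literal per variable of $\mathbf{C}_1$), an assignment of values to the literals of $\mathbf{B}$ determines an assignment to $\mathbf{C}_1$; thus e.g. $D_{\mathbf{B}=\mathbf{1},\mathbf{C}_2=\mathbf{c}_2}(\omega)$ denotes the potential outcome when all literals in $\mathbf{B}$ are set to 1 and $\mathbf{C}_2$ to $\mathbf{c}_2$, and $D_{\mathbf{B}\setminus\{L\}=\mathbf{1},L=0,\mathbf{C}_2=\mathbf{c}_2}(\omega)$ the one where $L$ is set to 0 and the other literals of $\mathbf{B}$ to 1. A sufficient cause representation $(\mathbf{A},\mathfrak{B})$ for $\mathcal{D}(\mathbf{C},\Omega)$ is a tuple $\mathbf{A}=\langle A_1,\dots,A_p\rangle$ of binary random variables on $\Omega$ unaffected by interventions on $\mathbf{C}$ and a tuple $\mathfrak{B}=\langle\mathbf{B}_1,\dots,\mathbf{B}_p\rangle$, $\mathbf{B}_i\in\dot{\mathbb{P}}(\mathbb{L}(\mathbf{C}))$, such that for all $\omega,\mathbf{c}$: $D_{\mathbf{c}}(\omega)=1$ iff some $j$ has $A_j(\omega)=1$ and $(\bigwedge(\mathbf{B}_j))_{\mathbf{c}}=1$. A set $\mathbf{B}\in\dot{\mathbb{P}}(\mathbb{L}(\mathbf{C}))$ is irreducible for $\mathcal{D}(\mathbf{C},\Omega)$ if in every sufficient cause representation $(\mathbf{A},\mathfrak{B})$ for $\mathcal{D}(\mathbf{C},\Omega)$ there is some $\mathbf{B}_i\in\mathfrak{B}$ with $\mathbf{B}\subseteq\mathbf{B}_i$.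 *)

theory Defs
  imports Main
begin

text \<open>A literal is a pair (X, b): (X, True) stands for
  the event X and (X, False) for its complement. An assignment to a set C of causes is
  a function 'v => bool that is False outside C (extensional representation).\<close>

type_synonym 'v lit = "'v \<times> bool"

definition assignments :: "'v set \<Rightarrow> ('v \<Rightarrow> bool) set" where
  "assignments C = {c. \<forall>v. v \<notin> C \<longrightarrow> c v = False}"

definition lit_val :: "('v \<Rightarrow> bool) \<Rightarrow> 'v lit \<Rightarrow> bool" where
  "lit_val c L = (c (fst L) = snd L)"

definition conj_val :: "('v \<Rightarrow> bool) \<Rightarrow> 'v lit set \<Rightarrow> bool" where
  "conj_val c B = (\<forall>L\<in>B. lit_val c L)"

definition literals :: "'v set \<Rightarrow> 'v lit set" where
  "literals C = C \<times> UNIV"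

definition consistent_lits :: "'v set \<Rightarrow> 'v lit set set" where
  "consistent_lits C = {B. B \<subseteq> literals C \<and> (\<forall>X. \<not> ((X, True) \<in> B \<and> (X, False) \<in> B))}"

text \<open>D w c is the potential outcome D_c(w). The A_j are functions of the
  individual only, hence unaffected by interventions on C.\<close>
definition suff_cause_rep ::
  "'v set \<Rightarrow> 'w set \<Rightarrow> ('w \<Rightarrow> ('v \<Rightarrow> bool) \<Rightarrow> bool)
     \<Rightarrow> ('w \<Rightarrow> bool) list \<Rightarrow> 'v lit set list \<Rightarrow> bool" where
  "suff_cause_rep C \<Omega> D A BB \<longleftrightarrow>
     length A = length BB \<and> (\<forall>i<length BB. BB ! i \<in> consistent_lits C) \<and>
     (\<forall>\<omega>\<in>\<Omega>. \<forall>c\<in>assignments C.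
        D \<omega> c \<longleftrightarrow> (\<exists>j<length A. (A ! j) \<omega> \<and> conj_val c (BB ! j)))"

definition irreducible ::
  "'v set \<Rightarrow> 'w set \<Rightarrow> ('w \<Rightarrow> ('v \<Rightarrow> bool) \<Rightarrow> bool) \<Rightarrow> 'v lit set \<Rightarrow> bool" where
  "irreducible C \<Omega> D B \<longleftrightarrow>
     (\<forall>A BB. suff_cause_rep C \<Omega> D A BB \<longrightarrow> (\<exists>i<length BB. B \<subseteq> BB ! i))"

definition set_lits :: "'v lit set \<Rightarrow> ('v \<Rightarrow> bool) \<Rightarrow> ('v \<Rightarrow> bool)" where
  "set_lits B c2 = (\<lambda>v. if \<exists>b. (v, b) \<in> B then (THE b. (v, b) \<in> B) else c2 v)"

end

theory Submission
  imports Defs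
begin

text \<open>If an individual and an assignment c satisfying B give outcome 1 at c but 0 after
  flipping any single literal of B, then every sufficient cause active for that individual
  at c contains all of B: a literal of B missing from the cause could be flipped without
  falsifying it. Conversely, if no such pair exists, D has an explicit representation none of
  whose causes contains B. The assignments (B = 1, C2 = c2) are exactly the assignments
  satisfying B.\<close>

lemma finite_assignments: "finite C \<Longrightarrow> finite (assignments C)"
proof -
  assume "finite C"
  have "assignments C \<subseteq> (\<lambda>A v. v \<in> A) ` Pow C"
  proof
    fix c assume "c \<in> assignments C"
    then have "c = (\<lambda>v. v \<in> {v. c v})" "{v. c v} \<subseteq> C" by (auto simp: assignments_def)
    then show "c \<in> (\<lambda>A v. v \<in> A) ` Pow C" by blast
  qed
  with \<open>finite C\<close> show ?thesis using finite_subset by blast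
qed

definition assignment_lits :: "'v set \<Rightarrow> ('v \<Rightarrow> bool) \<Rightarrow> 'v lit set" where
  "assignment_lits C c = (\<lambda>v. (v, c v)) ` C"

lemma assignment_lits_Diff_consistent: "assignment_lits C c - X \<in> consistent_lits C"
  by (auto simp: assignment_lits_def consistent_lits_def literals_def)

lemma conj_val_assignment_lits_Diff: "conj_val c (assignment_lits C c - X)"
  by (auto simp: assignment_lits_def conj_val_def lit_val_def)

lemma conj_val_assignment_lits_eq:
  assumes "c \<in> assignments C" "c' \<in> assignments C" "conj_val c (assignment_lits C c')"
  shows "c = c'"
proof
  fix v show "c v = c' v"
    using assms
    by (cases "v \<in> C") (auto simp: assignments_def assignment_lits_def conj_val_def lit_val_def)
qed

lemma conj_val_assignment_lits_Diff_singleton: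
  assumes "c \<in> assignments C" "c' \<in> assignments C" "conj_val c (assignment_lits C c' - {L})"
  shows "c = c' \<or> c = c'(fst L := \<not> c' (fst L))"
proof -
  have agree: "c v = c' v" if "v \<noteq> fst L" for v
  proof (cases "v \<in> C")
    case True
    with that have "(v, c' v) \<in> assignment_lits C c' - {L}"
      by (auto simp: assignment_lits_def)
    with assms(3) have "lit_val c (v, c' v)" unfolding conj_val_def by blast
    then show ?thesis by (simp add: lit_val_def)
  next
    case False
    with assms(1,2) show ?thesis by (auto simp: assignments_def)
  qed
  show ?thesis
  proof (cases "c (fst L) = c' (fst L)")
    case True
    have "c = c'"
    proof
      fix x show "c x = c' x" using agree True by (cases "x = fst L") auto
    qed
    then show ?thesis ..
  next
    case False
    have "c = c'(fst L := \<not> c' (fst L))"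
    proof
      fix x show "c x = (c'(fst L := \<not> c' (fst L))) x"
        using agree False by (cases "x = fst L") auto
    qed
    then show ?thesis ..
  qed
qed

lemma conj_val_fun_upd_not:
  assumes "conj_val c B" "(v, c v) \<notin> B"
  shows "conj_val (c(v := \<not> c v)) B"
  unfolding conj_val_def
proof
  fix L assume "L \<in> B"
  with assms have "lit_val c L" "L \<noteq> (v, c v)" by (auto simp: conj_val_def)
  then have "fst L \<noteq> v" "c (fst L) = snd L" by (auto simp: lit_val_def prod_eq_iff)
  then show "lit_val (c(v := \<not> c v)) L" by (simp add: lit_val_def)
qed

lemma irreducibleD_finite:
  assumes "irreducible C \<Omega> D B" "finite S"
    and "\<And>X. X \<in> S \<Longrightarrow> snd X \<in> consistent_lits C"
    and "\<And>\<omega> c. \<omega> \<in> \<Omega> \<Longrightarrow> c \<in> assignments C \<Longrightarrow>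
           D \<omega> c \<longleftrightarrow> (\<exists>X\<in>S. fst X \<omega> \<and> conj_val c (snd X))"
  shows "\<exists>X\<in>S. B \<subseteq> snd X"
proof -
  obtain xs where xs: "set xs = S" using \<open>finite S\<close> finite_list by blast
  have "suff_cause_rep C \<Omega> D (map fst xs) (map snd xs)"
    unfolding suff_cause_rep_def
  proof (intro conjI allI impI ballI)
    fix i assume "i < length (map snd xs)"
    then have "xs ! i \<in> S" using xs nth_mem by fastforce
    then show "map snd xs ! i \<in> consistent_lits C"
      using assms(3) \<open>i < _\<close> by (metis length_map nth_map prod.collapse)
  next
    fix \<omega> c assume "\<omega> \<in> \<Omega>" "c \<in> assignments C"
    then have "D \<omega> c \<longleftrightarrow> (\<exists>x\<in>set xs. fst x \<omega> \<and> conj_val c (snd x))"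
      using assms(4) xs by simp
    also have "\<dots> \<longleftrightarrow> (\<exists>j<length xs. fst (xs ! j) \<omega> \<and> conj_val c (snd (xs ! j)))"
      by (metis in_set_conv_nth)
    finally show "D \<omega> c \<longleftrightarrow>
        (\<exists>j<length (map fst xs). (map fst xs ! j) \<omega> \<and> conj_val c (map snd xs ! j))"
      by auto
  qed simp
  with assms(1) obtain i where "i < length (map snd xs)" "B \<subseteq> map snd xs ! i"
    unfolding irreducible_def by blast
  then have "xs ! i \<in> S" "B \<subseteq> snd (xs ! i)" using xs by auto
  then show ?thesis ..
qed

text \<open>Conditions (i) and (ii), stated for an arbitrary assignment c to all causes that
  satisfies B.\<close>
definition irreducibility_witness ::
  "'v set \<Rightarrow> 'w set \<Rightarrow> ('w \<Rightarrow> ('v \<Rightarrow> bool) \<Rightarrow> bool) \<Rightarrow> 'v lit set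
     \<Rightarrow> 'w \<Rightarrow> ('v \<Rightarrow> bool) \<Rightarrow> bool" where
  "irreducibility_witness C \<Omega> D B \<omega> c \<longleftrightarrow>
     \<omega> \<in> \<Omega> \<and> c \<in> assignments C \<and> conj_val c B \<and> D \<omega> c \<and>
     (\<forall>L\<in>B. \<not> D \<omega> (c(fst L := \<not> snd L)))"

lemma irreducible_if_witness:
  assumes "fst ` B \<subseteq> C" "irreducibility_witness C \<Omega> D B \<omega> c"
  shows "irreducible C \<Omega> D B"
  unfolding irreducible_def
proof (intro allI impI)
  from assms(2) have "\<omega> \<in> \<Omega>" "c \<in> assignments C" "conj_val c B" "D \<omega> c"
    and flip: "\<And>L. L \<in> B \<Longrightarrow> \<not> D \<omega> (c(fst L := \<not> snd L))"
    unfolding irreducibility_witness_def by auto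
  fix A BB assume rep: "suff_cause_rep C \<Omega> D A BB"
  with \<open>\<omega> \<in> \<Omega>\<close> \<open>c \<in> assignments C\<close> \<open>D \<omega> c\<close>
  obtain j where j: "j < length BB" "(A ! j) \<omega>" "conj_val c (BB ! j)"
    unfolding suff_cause_rep_def by metis
  have "L \<in> BB ! j" if "L \<in> B" for L
  proof (rule ccontr)
    assume "L \<notin> BB ! j"
    have L: "L = (fst L, c (fst L))"
      using \<open>L \<in> B\<close> \<open>conj_val c B\<close> by (auto simp: conj_val_def lit_val_def)
    with \<open>L \<notin> BB ! j\<close> have "conj_val (c(fst L := \<not> c (fst L))) (BB ! j)"
      using conj_val_fun_upd_not j(3) by metis
    moreover have "c(fst L := \<not> c (fst L)) \<in> assignments C"
      using assms(1) \<open>c \<in> assignments C\<close> \<open>L \<in> B\<close> by (auto simp: assignments_def)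
    ultimately have "D \<omega> (c(fst L := \<not> c (fst L)))"
      using rep j \<open>\<omega> \<in> \<Omega>\<close> unfolding suff_cause_rep_def by metis
    with flip[OF \<open>L \<in> B\<close>] L show False by (metis snd_conv)
  qed
  with j(1) show "\<exists>i<length BB. B \<subseteq> BB ! i" by blast
qed

text \<open>When no witness exists, these sufficient causes represent D (with A_j read off the
  first components), and none of them contains B.\<close>
definition causes_avoiding ::
  "'v set \<Rightarrow> ('w \<Rightarrow> ('v \<Rightarrow> bool) \<Rightarrow> bool) \<Rightarrow> 'v lit set \<Rightarrow> (('w \<Rightarrow> bool) \<times> 'v lit set) set"
where
  "causes_avoiding C D B =
     (\<lambda>c. (\<lambda>\<omega>. D \<omega> c, assignment_lits C c)) ` {c \<in> assignments C. \<not> conj_val c B} \<union>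
     (\<lambda>(c, L). (\<lambda>\<omega>. D \<omega> c \<and> D \<omega> (c(fst L := \<not> c (fst L))), assignment_lits C c - {L}))
       ` (assignments C \<times> B)"

lemma finite_causes_avoiding: "finite C \<Longrightarrow> finite B \<Longrightarrow> finite (causes_avoiding C D B)"
  by (simp add: causes_avoiding_def finite_assignments)

lemma causes_avoiding_consistent:
  "X \<in> causes_avoiding C D B \<Longrightarrow> snd X \<in> consistent_lits C"
  using assignment_lits_Diff_consistent[of C _ "{}"] assignment_lits_Diff_consistent
  by (auto simp: causes_avoiding_def)

lemma causes_avoiding_not_superset:
  assumes "X \<in> causes_avoiding C D B"
  shows "\<not> B \<subseteq> snd X"
proof
  assume "B \<subseteq> snd X"
  with assms consider c where "\<not> conj_val c B" "B \<subseteq> assignment_lits C c"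
    | L c where "L \<in> B" "B \<subseteq> assignment_lits C c - {L}"
    unfolding causes_avoiding_def by auto
  then show False
  proof cases
    case 1
    then show False
      using conj_val_assignment_lits_Diff[of c C "{}"] by (auto simp: conj_val_def)
  qed blast
qed

lemma causes_avoiding_sound:
  assumes "X \<in> causes_avoiding C D B" "fst X \<omega>" "c \<in> assignments C" "conj_val c (snd X)"
  shows "D \<omega> c"
proof -
  from assms(1) consider
      c' where "c' \<in> assignments C" "X = (\<lambda>\<omega>. D \<omega> c', assignment_lits C c')"
    | c' L where "c' \<in> assignments C"
        "X = (\<lambda>\<omega>. D \<omega> c' \<and> D \<omega> (c'(fst L := \<not> c' (fst L))), assignment_lits C c' - {L})"
    unfolding causes_avoiding_def by auto
  then show ?thesis
  proof cases
    case 1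
    with assms(2-4) show ?thesis using conj_val_assignment_lits_eq by fastforce
  next
    case 2
    with assms(3,4) have "c = c' \<or> c = c'(fst L := \<not> c' (fst L))"
      using conj_val_assignment_lits_Diff_singleton by simp
    with assms(2) 2 show ?thesis by auto
  qed
qed

lemma causes_avoiding_complete:
  assumes no_witness: "\<And>\<omega> c. \<not> irreducibility_witness C \<Omega> D B \<omega> c"
    and "\<omega> \<in> \<Omega>" "c \<in> assignments C" "D \<omega> c"
  shows "\<exists>X\<in>causes_avoiding C D B. fst X \<omega> \<and> conj_val c (snd X)"
proof (cases "conj_val c B")
  case False
  with assms(3) have "(\<lambda>\<omega>. D \<omega> c, assignment_lits C c) \<in> causes_avoiding C D B"
    unfolding causes_avoiding_def by blast
  then show ?thesis
    using \<open>D \<omega> c\<close> conj_val_assignment_lits_Diff[of c C "{}"] by force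
next
  case True
  with no_witness assms(2-4) obtain L where "L \<in> B" "D \<omega> (c(fst L := \<not> snd L))"
    unfolding irreducibility_witness_def by blast
  moreover have "snd L = c (fst L)"
    using \<open>L \<in> B\<close> True by (auto simp: conj_val_def lit_val_def)
  ultimately have "D \<omega> (c(fst L := \<not> c (fst L)))" by simp
  moreover have "(\<lambda>\<omega>. D \<omega> c \<and> D \<omega> (c(fst L := \<not> c (fst L))), assignment_lits C c - {L})
      \<in> causes_avoiding C D B"
    unfolding causes_avoiding_def
    by (rule UnI2, rule image_eqI[where x = "(c, L)"]) (simp_all add: assms(3) \<open>L \<in> B\<close>)
  ultimately show ?thesis
    using \<open>D \<omega> c\<close> conj_val_assignment_lits_Diff[of c C "{L}"] by force
qed

lemma witness_if_irreducible:
  assumes "finite C" "fst ` B \<subseteq> C" "irreducible C \<Omega> D B"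
  shows "\<exists>\<omega> c. irreducibility_witness C \<Omega> D B \<omega> c"
proof (rule ccontr)
  assume "\<not> ?thesis"
  then have no_witness: "\<And>\<omega> c. \<not> irreducibility_witness C \<Omega> D B \<omega> c" by blast
  have "finite B"
    using assms(1,2) finite_subset[of B "C \<times> UNIV"] by (force intro: finite_cartesian_product)
  have "\<exists>X\<in>causes_avoiding C D B. B \<subseteq> snd X"
  proof (rule irreducibleD_finite[OF assms(3)])
    show "finite (causes_avoiding C D B)"
      using assms(1) \<open>finite B\<close> by (rule finite_causes_avoiding)
    show "D \<omega> c \<longleftrightarrow> (\<exists>X\<in>causes_avoiding C D B. fst X \<omega> \<and> conj_val c (snd X))"
      if "\<omega> \<in> \<Omega>" "c \<in> assignments C" for \<omega> c
    proof
      assume "D \<omega> c"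
      with that show "\<exists>X\<in>causes_avoiding C D B. fst X \<omega> \<and> conj_val c (snd X)"
        by (rule causes_avoiding_complete[OF no_witness])
    next
      assume "\<exists>X\<in>causes_avoiding C D B. fst X \<omega> \<and> conj_val c (snd X)"
      then obtain X where "X \<in> causes_avoiding C D B" "fst X \<omega>" "conj_val c (snd X)" by blast
      with that(2) show "D \<omega> c" by (intro causes_avoiding_sound[of X C D B])
    qed
  qed (rule causes_avoiding_consistent)
  then show False using causes_avoiding_not_superset by blast
qed

lemma irreducible_iff_witness:
  assumes "finite C" "fst ` B \<subseteq> C"
  shows "irreducible C \<Omega> D B \<longleftrightarrow> (\<exists>\<omega> c. irreducibility_witness C \<Omega> D B \<omega> c)"
proof
  assume "irreducible C \<Omega> D B"
  with assms show "\<exists>\<omega> c. irreducibility_witness C \<Omega> D B \<omega> c"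
    by (rule witness_if_irreducible)
next
  assume "\<exists>\<omega> c. irreducibility_witness C \<Omega> D B \<omega> c"
  then obtain \<omega> c where "irreducibility_witness C \<Omega> D B \<omega> c" by blast
  with assms(2) show "irreducible C \<Omega> D B" by (rule irreducible_if_witness)
qed

lemma consistent_lits_unique:
  assumes "B \<in> consistent_lits C" "(v, b) \<in> B" "(v, b') \<in> B"
  shows "b = b'"
  using assms unfolding consistent_lits_def by (cases b; cases b') auto

lemma fst_image_eq_if_card_eq:
  assumes "finite C" "B \<in> consistent_lits C" "card B = card C"
  shows "fst ` B = C"
proof (rule card_subset_eq[OF \<open>finite C\<close>])
  show "fst ` B \<subseteq> C" using assms(2) by (auto simp: consistent_lits_def literals_def)
  have "inj_on fst B"
  proof (rule inj_onI)
    fix x y assume "x \<in> B" "y \<in> B" "fst x = fst y"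
    then have "snd x = snd y"
      using consistent_lits_unique[OF assms(2), of "fst x" "snd x" "snd y"] by (metis prod.collapse)
    with \<open>fst x = fst y\<close> show "x = y" by (simp add: prod_eq_iff)
  qed
  then show "card (fst ` B) = card C" using assms(3) by (simp add: card_image)
qed

lemma set_lits_mem:
  assumes "B \<in> consistent_lits C" "(v, b) \<in> B"
  shows "set_lits B c2 v = b"
proof -
  have "(THE b. (v, b) \<in> B) = b"
    using assms consistent_lits_unique[OF assms(1)] by (intro the_equality) auto
  with assms(2) show ?thesis unfolding set_lits_def by auto
qed

lemma set_lits_not_mem: "v \<notin> fst ` B \<Longrightarrow> set_lits B c2 v = c2 v"
  unfolding set_lits_def by force

lemma set_lits_image_assignments:
  assumes "fst ` B = C1" "B \<in> consistent_lits C1"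
  shows "set_lits B ` assignments C2 = {c \<in> assignments (C1 \<union> C2). conj_val c B}"
proof (intro equalityI image_subsetI subsetI)
  fix c2 assume "c2 \<in> assignments C2"
  have "set_lits B c2 \<in> assignments (C1 \<union> C2)"
    using \<open>c2 \<in> _\<close> by (simp add: assignments_def set_lits_not_mem assms(1))
  moreover have "conj_val (set_lits B c2) B"
    using set_lits_mem[OF assms(2)] by (auto simp: conj_val_def lit_val_def)
  ultimately show "set_lits B c2 \<in> {c \<in> assignments (C1 \<union> C2). conj_val c B}" by simp
next
  fix c assume c: "c \<in> {c \<in> assignments (C1 \<union> C2). conj_val c B}"
  have "set_lits B (\<lambda>v. v \<in> C2 \<and> c v) = c"
  proof
    fix v show "set_lits B (\<lambda>v. v \<in> C2 \<and> c v) v = c v"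
    proof (cases "v \<in> C1")
      case True
      with assms(1) obtain b where "(v, b) \<in> B" by force
      with c show ?thesis
        using set_lits_mem[OF assms(2)] by (auto simp: conj_val_def lit_val_def)
    next
      case False
      with assms(1) have "v \<notin> fst ` B" by simp
      with c False show ?thesis by (auto simp: set_lits_not_mem assignments_def)
    qed
  qed
  moreover have "(\<lambda>v. v \<in> C2 \<and> c v) \<in> assignments C2" by (simp add: assignments_def)
  ultimately show "c \<in> set_lits B ` assignments C2" by (metis image_eqI)
qed

theorem mainTheorem2:
  fixes C1 C2 :: "'v set" and \<Omega> :: "'w set"
    and D :: "'w \<Rightarrow> ('v \<Rightarrow> bool) \<Rightarrow> bool" and B :: "'v lit set"
  assumes "finite C1" and "finite C2" and "C1 \<inter> C2 = {}"
    and "B \<in> consistent_lits C1" and "card B = card C1"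
  shows "irreducible (C1 \<union> C2) \<Omega> D B \<longleftrightarrow>
    (\<exists>\<omega>\<in>\<Omega>. \<exists>c2\<in>assignments C2.
       D \<omega> (set_lits B c2) \<and>
       (\<forall>L\<in>B. \<not> D \<omega> ((set_lits B c2)(fst L := \<not> snd L))))"
proof -
  have fst_B: "fst ` B = C1" using fst_image_eq_if_card_eq assms(1,4,5) .
  have "irreducible (C1 \<union> C2) \<Omega> D B \<longleftrightarrow>
      (\<exists>\<omega> c. irreducibility_witness (C1 \<union> C2) \<Omega> D B \<omega> c)"
    by (rule irreducible_iff_witness) (use assms(1,2) fst_B in auto)
  also have "\<dots> \<longleftrightarrow> (\<exists>\<omega>\<in>\<Omega>. \<exists>c2\<in>assignments C2.
       D \<omega> (set_lits B c2) \<and> (\<forall>L\<in>B. \<not> D \<omega> ((set_lits B c2)(fst L := \<not> snd L))))"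
  proof -
    have "irreducibility_witness (C1 \<union> C2) \<Omega> D B \<omega> c \<longleftrightarrow>
        \<omega> \<in> \<Omega> \<and> c \<in> set_lits B ` assignments C2 \<and> D \<omega> c \<and>
        (\<forall>L\<in>B. \<not> D \<omega> (c(fst L := \<not> snd L)))" for \<omega> c
      unfolding irreducibility_witness_def set_lits_image_assignments[OF fst_B assms(4)] by auto
    then show ?thesis by (auto 4 3)
  qed
  finally show ?thesis .
qed

end
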